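(* For every $N\ge1$, the $\mathbb Q$-vector space $\mathcal{ZF}_N$ (taken over $\Bbbk=\mathbb Q$) has dimension $N-\lfloor N/2\rfloor=\lceil N/2\rceil$.
   Context: $\mathcal F_N$ is the free $\Bbbk$-module on symbols $F^{l,m,k}$, $l,m,k\ge0$, $l+m+k+1=N$; $\mathcal{ZF}_N:=\mathcal F_N/I$ with $I$ generated by all $F^{l,m,k}-F^{m,l,k}$ and all $F^{l,m+1,k}+F^{l+1,m,k}-F^{l,m,k+1}$. *)

theory Defs
  imports Complex_Main "HOL-Library.Function_Algebras"
begin

text \<open>Vectors of F_N are represented as rational-valued functions on index triples (l,m,k);
  the basis symbol F^{l,m,k} is the indicator function of (l,m,k).\<close>

type_synonym vec = "nat \<times> nat \<times> nat \<Rightarrow> rat"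

definition qscale :: "rat \<Rightarrow> vec \<Rightarrow> vec" where
  "qscale c f = (\<lambda>x. c * f x)"

definition Fsym :: "nat \<Rightarrow> nat \<Rightarrow> nat \<Rightarrow> vec" where
  "Fsym l m k = (\<lambda>x. if x = (l, m, k) then 1 else 0)"

definition FN :: "nat \<Rightarrow> vec set" where
  "FN N = module.span qscale {Fsym l m k | l m k. l + m + k + 1 = N}"

definition IN :: "nat \<Rightarrow> vec set" where
  "IN N = module.span qscale
     ({Fsym l m k - Fsym m l k | l m k. l + m + k + 1 = N} \<union>
      {Fsym l (m+1) k + Fsym (l+1) m k - Fsym l m (k+1) | l m k. l + m + k + 2 = N})"

text \<open>The quotient V/W (W a subspace of V) has dimension d iff there is a finite family
  B \<subseteq> V of d vectors whose classes form a basis of V/W: they are linearly independent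
  modulo W and together with W they span V.\<close>
definition quotient_dim :: "vec set \<Rightarrow> vec set \<Rightarrow> nat \<Rightarrow> bool" where
  "quotient_dim V W d \<longleftrightarrow>
     (\<exists>B. finite B \<and> card B = d \<and> B \<subseteq> V \<and>
        (\<forall>c. (\<Sum>b\<in>B. qscale (c b) b) \<in> W \<longrightarrow> (\<forall>b\<in>B. c b = 0)) \<and>
        V \<subseteq> module.span qscale (B \<union> W))"

definition ZF_dim :: "nat \<Rightarrow> nat \<Rightarrow> bool" where
  "ZF_dim N d \<longleftrightarrow> quotient_dim (FN N) (IN N) d"

end

theory Submission
  imports Defs
begin

text \<open>Write \<open>n = N - 1\<close> for the common value of \<open>l + m + k\<close>. The relation
  \<open>F^{l,m,k+1} = F^{l,m+1,k} + F^{l+1,m,k}\<close> lowers \<open>k\<close>, so modulo \<open>I\<close> everything is a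
  combination of the \<open>F^{a,n-a,0}\<close>, and the symmetry in the first two indices leaves those
  with \<open>2a \<ge> n\<close>: there are \<open>\<lceil>N/2\<rceil>\<close> of them. They are independent modulo \<open>I\<close>
  because each has a dual functional vanishing on \<open>I\<close>: start from the indicator of
  \<open>{a, n - a}\<close> on the row \<open>k = 0\<close> and propagate it to all \<open>k\<close> by Pascal's recursion,
  which is exactly the second family of relations; the first family holds because the
  initial row is invariant under \<open>l \<mapsto> n - l\<close>.\<close>

lemma module_qscale: "module qscale"
  by unfold_locales (auto simp: qscale_def fun_eq_iff algebra_simps)

interpretation Q: module qscale
  by (rule module_qscale)

lemma module_rat_mult: "module ((*) :: rat \<Rightarrow> rat \<Rightarrow> rat)"
  by unfold_locales (auto simp: algebra_simps)

lemma quotient_dim_by_dual_family: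
  fixes g :: "'i \<Rightarrow> vec" and \<phi> :: "'i \<Rightarrow> vec \<Rightarrow> rat"
  assumes "finite A" and "g ` A \<subseteq> V" and "V \<subseteq> Q.span (g ` A \<union> W)"
    and hom: "\<And>a. a \<in> A \<Longrightarrow> module_hom qscale (*) (\<phi> a)"
    and vanish: "\<And>a w. a \<in> A \<Longrightarrow> w \<in> W \<Longrightarrow> \<phi> a w = 0"
    and dual: "\<And>a a'. a \<in> A \<Longrightarrow> a' \<in> A \<Longrightarrow> \<phi> a (g a') = (if a = a' then 1 else 0)"
  shows "quotient_dim V W (card A)"
  unfolding quotient_dim_def
proof (intro exI conjI allI impI ballI)
  have inj: "inj_on g A"
    by (rule inj_onI) (metis dual zero_neq_one)
  show "finite (g ` A)" using \<open>finite A\<close> by simp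
  show "card (g ` A) = card A" using inj by (rule card_image)
  show "g ` A \<subseteq> V" "V \<subseteq> Q.span (g ` A \<union> W)" by fact+
  fix c b
  assume in_W: "(\<Sum>b\<in>g ` A. qscale (c b) b) \<in> W" and "b \<in> g ` A"
  then obtain a where a: "a \<in> A" "b = g a" by blast
  interpret \<phi>: module_hom qscale "(*)" "\<phi> a" using hom a(1) .
  have "0 = \<phi> a (\<Sum>b\<in>g ` A. qscale (c b) b)"
    using vanish a(1) in_W by simp
  also have "\<dots> = (\<Sum>a'\<in>A. c (g a') * \<phi> a (g a'))"
    by (simp add: \<phi>.sum \<phi>.scale sum.reindex[OF inj])
  also have "\<dots> = (\<Sum>a'\<in>A. if a' = a then c (g a) else 0)"
    using a(1) by (intro sum.cong) (auto simp: dual)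
  also have "\<dots> = c (g a)"
    using a(1) \<open>finite A\<close> by simp
  finally show "c b = 0" using a(2) by simp
qed

lemma Fsym_in_FN: "l + m + k + 1 = N \<Longrightarrow> Fsym l m k \<in> FN N"
  unfolding FN_def by (rule Q.span_base) blast

lemma Fsym_swap_in_IN: "l + m + k + 1 = N \<Longrightarrow> Fsym l m k - Fsym m l k \<in> IN N"
  unfolding IN_def by (rule Q.span_base) blast

lemma Fsym_Pascal_in_IN:
  "l + m + k + 2 = N \<Longrightarrow> Fsym l (m + 1) k + Fsym (l + 1) m k - Fsym l m (k + 1) \<in> IN N"
  unfolding IN_def by (rule Q.span_base) blast

lemma Fsym_in_span_normal_forms:
  "l + m + k = n \<Longrightarrow>
     Fsym l m k \<in> Q.span ((\<lambda>a. Fsym a (n - a) 0) ` {(n + 1) div 2..n} \<union> IN (Suc n))"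
  (is "_ \<Longrightarrow> _ \<in> ?S")
proof (induction k arbitrary: l m)
  case 0
  have normal_form_in_S: "Fsym a b 0 \<in> ?S" if "a + b = n" "n \<le> 2 * a" for a b
    using that by (intro Q.span_base UnI1 image_eqI[where x = a]) auto
  show ?case
  proof (cases "n \<le> 2 * l")
    case True
    then show ?thesis using 0 normal_form_in_S by simp
  next
    case False
    have "Fsym l m 0 - Fsym m l 0 \<in> ?S"
      using 0 by (intro Q.span_base UnI2 Fsym_swap_in_IN) simp
    moreover have "Fsym m l 0 \<in> ?S"
      using 0 False normal_form_in_S by simp
    ultimately show ?thesis
      using Q.span_add by fastforce
  qed
next
  case (Suc k)
  have "Fsym l (m + 1) k + Fsym (l + 1) m k - Fsym l m (k + 1) \<in> ?S"
    using Suc.prems by (intro Q.span_base UnI2 Fsym_Pascal_in_IN) simp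
  moreover have "Fsym l (m + 1) k + Fsym (l + 1) m k \<in> ?S"
    using Suc by (intro Q.span_add Suc.IH) simp_all
  ultimately show ?case
    using Q.span_diff by fastforce
qed

lemma FN_subset_span_normal_forms:
  "FN (Suc n) \<subseteq> Q.span ((\<lambda>a. Fsym a (n - a) 0) ` {(n + 1) div 2..n} \<union> IN (Suc n))"
  unfolding FN_def
proof (rule Q.span_minimal)
  show "{Fsym l m k |l m k. l + m + k + 1 = Suc n} \<subseteq>
      Q.span ((\<lambda>a. Fsym a (n - a) 0) ` {(n + 1) div 2..n} \<union> IN (Suc n))"
    using Fsym_in_span_normal_forms[of _ _ _ n] by force
qed (rule Q.subspace_span)

text \<open>\<open>dual_coeff n a l k\<close> is the value at \<open>F^{l,n-l-k,k}\<close> of the functional dual to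
  \<open>F^{a,n-a,0}\<close>; in closed form it is \<open>\<Sum>\<^sub>j (k choose j) [l + j \<in> {a, n - a}]\<close>.\<close>

fun dual_coeff :: "nat \<Rightarrow> nat \<Rightarrow> nat \<Rightarrow> nat \<Rightarrow> rat" where
  "dual_coeff n a l 0 = (if l = a \<or> l = n - a then 1 else 0)"
| "dual_coeff n a l (Suc k) = dual_coeff n a l k + dual_coeff n a (Suc l) k"

lemma dual_coeff_swap:
  "a \<le> n \<Longrightarrow> l + k \<le> n \<Longrightarrow> dual_coeff n a l k = dual_coeff n a (n - l - k) k"
proof (induction k arbitrary: l)
  case 0
  then show ?case by auto
next
  case (Suc k)
  have IH1: "dual_coeff n a l k = dual_coeff n a (Suc (n - l - Suc k)) k"
    using Suc.prems by (subst Suc.IH) (auto simp: Suc_diff_Suc)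
  have IH2: "dual_coeff n a (Suc l) k = dual_coeff n a (n - l - Suc k) k"
    using Suc.prems by (subst Suc.IH) auto
  have "dual_coeff n a l (Suc k) = dual_coeff n a l k + dual_coeff n a (Suc l) k"
    by simp
  also have "\<dots> = dual_coeff n a (n - l - Suc k) (Suc k)"
    unfolding IH1 IH2 by simp
  finally show ?case .
qed

definition dual_functional :: "nat \<Rightarrow> nat \<Rightarrow> vec \<Rightarrow> rat" where
  "dual_functional n a v = (\<Sum>l\<le>n. \<Sum>k\<le>n - l. dual_coeff n a l k * v (l, n - l - k, k))"

lemma module_hom_dual_functional: "module_hom qscale (*) (dual_functional n a)"
  by (simp add: module_hom_iff module_qscale module_rat_mult dual_functional_def qscale_def
      algebra_simps sum.distrib sum_distrib_left)

lemma dual_functional_Fsym: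
  assumes "l + m + k = n"
  shows "dual_functional n a (Fsym l m k) = dual_coeff n a l k"
proof -
  have "dual_functional n a (Fsym l m k) =
      (\<Sum>l'\<le>n. \<Sum>k'\<le>n - l'. if l' = l \<and> k' = k then dual_coeff n a l k else 0)"
    unfolding dual_functional_def Fsym_def using assms
    by (intro sum.cong refl) auto
  also have "\<dots> = (\<Sum>l'\<le>n. if l' = l then dual_coeff n a l k else 0)"
    using assms by (intro sum.cong refl) (auto simp: sum.delta)
  also have "\<dots> = dual_coeff n a l k"
    using assms by (simp add: sum.delta)
  finally show ?thesis .
qed

lemma dual_functional_IN:
  assumes "a \<le> n" and "v \<in> IN (Suc n)"
  shows "dual_functional n a v = 0"
proof -
  interpret \<phi>: module_hom qscale "(*)" "dual_functional n a"
    by (rule module_hom_dual_functional)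
  have swap: "dual_functional n a (Fsym l m k - Fsym m l k) = 0" if "l + m + k + 1 = Suc n"
    for l m k
  proof -
    have "m = n - l - k" using that by simp
    then show ?thesis
      using that assms dual_coeff_swap[of a n l k] by (simp add: \<phi>.diff dual_functional_Fsym)
  qed
  have Pascal: "dual_functional n a (Fsym l (m + 1) k + Fsym (l + 1) m k - Fsym l m (k + 1)) = 0"
    if "l + m + k + 2 = Suc n" for l m k
    using that by (simp add: \<phi>.diff \<phi>.add dual_functional_Fsym)
  show ?thesis
    using assms(2) unfolding IN_def
    by (rule \<phi>.eq_0_on_span[rotated]) (use swap Pascal in blast)
qed

lemma dual_functional_normal_form:
  assumes "a \<in> {(n + 1) div 2..n}" and "a' \<in> {(n + 1) div 2..n}"
  shows "dual_functional n a (Fsym a' (n - a') 0) = (if a = a' then 1 else 0)"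
  using assms by (subst dual_functional_Fsym) auto

theorem mainTheorem5:
  fixes N :: nat
  assumes "N \<ge> 1"
  shows "ZF_dim N (N - N div 2)"
proof -
  obtain n where N: "N = Suc n" using assms by (cases N) auto
  have "quotient_dim (FN N) (IN N) (card {(n + 1) div 2..n})"
    unfolding N
  proof (rule quotient_dim_by_dual_family[where \<phi> = "dual_functional n"])
    show "(\<lambda>a. Fsym a (n - a) 0) ` {(n + 1) div 2..n} \<subseteq> FN (Suc n)"
      by (auto intro: Fsym_in_FN)
    show "FN (Suc n) \<subseteq> Q.span ((\<lambda>a. Fsym a (n - a) 0) ` {(n + 1) div 2..n} \<union> IN (Suc n))"
      by (rule FN_subset_span_normal_forms)
  qed (simp_all add: module_hom_dual_functional dual_functional_IN dual_functional_normal_form)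
  moreover have "card {(n + 1) div 2..n} = N - N div 2"
    unfolding N by simp
  ultimately show ?thesis
    unfolding ZF_dim_def by simp
qed

end
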